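(* Let $k$ be a positive integer and $p$ a prime with $(p-1)\nmid k$. Let $a_{1},\dots,a_{s},n$ be integers such that $p\nmid a_{j}$ for at least $3k$ of the indices $j$. Then $\chi_{p}(\mathbf a,n)>0$.
   Context: $\varphi$ is Euler's function. For $\mathbf a=(a_1,\dots,a_s)$ and $n\in\mathbb Z$, let $M_{\mathbf a,n}(p^m)$ be the number of $(x_1,\dots,x_s)\in((\mathbb Z/p^m\mathbb Z)^\times)^s$ with $a_1x_1^k+\dots+a_sx_s^k\equiv n\pmod{p^m}$, and $\chi_p(\mathbf a,n)=\lim_{m\to\infty}p^m\varphi(p^m)^{-s}M_{\mathbf a,n}(p^m)$ (the $p$-adic density of the equation $a_1x_1^k+\dots+a_sx_s^k=n$ in units). *)

theory Defs
  imports "HOL-Analysis.Analysis" "HOL-Number_Theory.Number_Theory"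
begin

definition M_count :: "nat \<Rightarrow> nat \<Rightarrow> (nat \<Rightarrow> int) \<Rightarrow> int \<Rightarrow> nat \<Rightarrow> nat \<Rightarrow> nat" where
  "M_count k s a n p m = card {x \<in> {..<s} \<rightarrow>\<^sub>E {0..<int p ^ m}.
      (\<forall>j<s. coprime (x j) (int p ^ m)) \<and>
      [(\<Sum>j<s. a j * x j ^ k) = n] (mod (int p ^ m))}"

definition chi_seq :: "nat \<Rightarrow> nat \<Rightarrow> (nat \<Rightarrow> int) \<Rightarrow> int \<Rightarrow> nat \<Rightarrow> nat \<Rightarrow> real" where
  "chi_seq k s a n p m = real (p ^ m) * real (M_count k s a n p m) / real (totient (p ^ m)) ^ s"

definition chi_p :: "nat \<Rightarrow> nat \<Rightarrow> (nat \<Rightarrow> int) \<Rightarrow> int \<Rightarrow> nat \<Rightarrow> real" where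
  "chi_p k s a n p = lim (chi_seq k s a n p)"

end

theory Submission
  imports Defs
begin

text \<open>Since \<open>p - 1\<close> does not divide \<open>k\<close>, \<open>p\<close> is odd and has a primitive root \<open>g\<close> modulo every
  power of \<open>p\<close>, so each unit variable is written as a power of \<open>g\<close> and solutions become
  exponent vectors. Let \<open>\<tau>\<close> be the multiplicity of \<open>p\<close> in \<open>k\<close>. For \<open>m > \<tau>\<close> the
  solvability of \<open>c x\<^sup>k \<equiv> v (mod p\<^sup>m)\<close> in a unit \<open>x\<close> does not change when \<open>m\<close> grows, so
  every solution modulo \<open>p\<^sup>m\<close> lifts to exactly \<open>p\<^sup>s\<^sup>-\<^sup>1\<close> solutions modulo \<open>p\<^sup>m\<^sup>+\<^sup>1\<close>: the
  normalised count is constant from \<open>m = \<tau> + 1\<close> on and equals its limit. It is positive there: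
  for each \<open>j\<close> with \<open>a\<^sub>j\<close> prime to \<open>p\<close> the values of \<open>a\<^sub>j x\<^sup>k\<close> contain
  \<open>e = (p - 1) / gcd(k, p - 1) \<ge> 2\<close> residues that are pairwise incongruent modulo \<open>p\<close>, and a
  Cauchy--Davenport inequality for such sets in \<open>\<int>/p\<^sup>m\<close> shows that \<open>3k\<close> of them add up to
  every residue class.\<close>

lemma card_less_mult_mod_eq:
  fixes N c r :: nat
  assumes "r < N"
  shows "card {t. t < c * N \<and> t mod N = r} = c"
proof -
  have "{t. t < c * N \<and> t mod N = r} = (\<lambda>u. r + N * u) ` {..<c}"
  proof (rule Set.set_eqI)
    fix t show "t \<in> {t. t < c * N \<and> t mod N = r} \<longleftrightarrow> t \<in> (\<lambda>u. r + N * u) ` {..<c}"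
    proof
      assume t: "t \<in> {t. t < c * N \<and> t mod N = r}"
      then have "t = r + N * (t div N)" using mod_mult_div_eq[of t N] by simp
      moreover have "t div N < c" using t assms by (auto simp: div_less_iff_less_mult)
      ultimately show "t \<in> (\<lambda>u. r + N * u) ` {..<c}" by blast
    next
      assume "t \<in> (\<lambda>u. r + N * u) ` {..<c}"
      then obtain u where u: "u < c" "t = r + N * u" by auto
      have "r + N * u < N * Suc u" using assms by simp
      also have "\<dots> \<le> N * c" using u(1) by (intro mult_le_mono2) simp
      finally show "t \<in> {t. t < c * N \<and> t mod N = r}" using u assms by (simp add: mult.commute)
    qed
  qed
  moreover have "inj_on (\<lambda>u. r + N * u) {..<c}" using assms by (auto simp: inj_on_def)
  ultimately show ?thesis by (simp add: card_image)
qed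

lemma cong_mult_lcancel_gcd_nat:
  fixes k N t t' :: nat
  assumes "N > 0"
  shows "[k * t = k * t'] (mod N) \<longleftrightarrow> [t = t'] (mod N div gcd k N)"
proof -
  define K where "K = gcd k N"
  define k' where "k' = k div K"
  define L where "L = N div K"
  have "K > 0" using assms by (simp add: K_def)
  have k': "k = K * k'" and L: "N = K * L" unfolding k'_def L_def K_def by simp_all
  have "coprime k' L"
    unfolding k'_def L_def K_def using assms by (intro div_gcd_coprime) simp
  have "[k * t = k * t'] (mod N) \<longleftrightarrow> [K * (k' * t) = K * (k' * t')] (mod K * L)"
    by (simp add: k' L mult.assoc)
  also have "\<dots> \<longleftrightarrow> [k' * t = k' * t'] (mod L)"
    using \<open>K > 0\<close> unfolding cong_def mod_mult_mult1 by simp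
  also have "\<dots> \<longleftrightarrow> [t = t'] (mod L)" using \<open>coprime k' L\<close> by (simp add: cong_mult_lcancel_nat)
  finally show ?thesis by (simp add: L_def K_def)
qed

lemma totient_prime_power_Suc_eq_mult:
  assumes "prime p" "m > 0"
  shows "totient (p ^ Suc m) = p * totient (p ^ m)"
proof -
  have "p ^ m = p * p ^ (m - 1)" using assms(2) by (cases m) auto
  then have "totient (p ^ Suc m) = p * (p ^ (m - 1) * (p - 1))"
    unfolding totient_prime_power_Suc[OF assms(1)] by (simp add: mult.assoc)
  then show ?thesis using totient_prime_power[OF assms] by simp
qed

lemma gcd_totient_prime_power:
  fixes p k m :: nat
  assumes p: "prime p" and "k > 0" and m: "multiplicity p k < m"
  shows "gcd k (totient (p ^ m)) = p ^ multiplicity p k * gcd k (p - 1)"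
proof -
  define \<tau> where "\<tau> = multiplicity p k"
  have "k \<noteq> 0" "\<not> is_unit p" using assms by auto
  then obtain k1 where k: "k = p ^ \<tau> * k1" and "\<not> p dvd k1"
    using multiplicity_decompose'[of k p] unfolding \<tau>_def by blast
  have "coprime k1 p" using prime_imp_coprime[OF p \<open>\<not> p dvd k1\<close>] by (simp add: coprime_commute)
  have "coprime (p - 1) p" using p by (intro coprime_diff_one_left_nat) (simp add: prime_gt_0_nat)
  then have "coprime (p - 1) (p ^ \<tau>)" by simp
  have "totient (p ^ m) = p ^ \<tau> * (p ^ (m - 1 - \<tau>) * (p - 1))"
    using m p unfolding \<tau>_def
    by (simp add: totient_prime_power mult.assoc power_add[symmetric])
  then have "gcd k (totient (p ^ m)) = p ^ \<tau> * gcd k1 (p ^ (m - 1 - \<tau>) * (p - 1))"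
    unfolding k by (simp add: gcd_mult_distrib_nat)
  also have "gcd k1 (p ^ (m - 1 - \<tau>) * (p - 1)) = gcd k1 (p - 1)"
    using \<open>coprime k1 p\<close> by (simp add: gcd_mult_right_left_cancel)
  also have "\<dots> = gcd k (p - 1)"
    unfolding k using \<open>coprime (p - 1) (p ^ \<tau>)\<close> by (simp add: gcd_mult_left_left_cancel)
  finally show ?thesis unfolding \<tau>_def .
qed

lemma prime_not_dvd_div_gcd_totient:
  fixes p k m :: nat
  assumes p: "prime p" and "k > 0" and m: "multiplicity p k < m"
  shows "\<not> p dvd k div gcd k (totient (p ^ m))"
proof -
  define \<tau> where "\<tau> = multiplicity p k"
  have "k \<noteq> 0" "\<not> is_unit p" using assms by auto
  then obtain k1 where k: "k = p ^ \<tau> * k1" and "\<not> p dvd k1"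
    using multiplicity_decompose'[of k p] unfolding \<tau>_def by blast
  have "coprime (p - 1) p" using p by (intro coprime_diff_one_left_nat) (simp add: prime_gt_0_nat)
  then have "coprime (p - 1) (p ^ \<tau>)" by simp
  then have "gcd k (p - 1) = gcd k1 (p - 1)"
    unfolding k by (simp add: gcd_mult_left_left_cancel)
  define d where "d = gcd k1 (p - 1)"
  obtain k2 where k1: "k1 = d * k2" unfolding d_def by (metis dvdE gcd_dvd1)
  have "gcd k (totient (p ^ m)) = p ^ \<tau> * d"
    using gcd_totient_prime_power[OF assms] \<open>gcd k (p - 1) = gcd k1 (p - 1)\<close>
    unfolding \<tau>_def d_def by simp
  moreover have "p ^ \<tau> * d > 0" using p \<open>k \<noteq> 0\<close> k k1 by (simp add: prime_gt_0_nat)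
  ultimately have "k div gcd k (totient (p ^ m)) = k2"
    unfolding k k1 using prime_gt_0_nat[OF p] by (simp add: mult.assoc)
  then show ?thesis using \<open>\<not> p dvd k1\<close> k1 by auto
qed

lemma prime_power_Suc_multiplicity_le:
  fixes p k :: nat
  assumes p: "prime p" and "k > 0" and "\<not> (p - 1) dvd k"
  shows "p ^ Suc (multiplicity p k) \<le> 3 * k * ((p - 1) div gcd k (p - 1) - 1)"
proof -
  define \<tau> where "\<tau> = multiplicity p k"
  define D where "D = gcd k (p - 1)"
  define e where "e = (p - 1) div D"
  have "p \<ge> 3" using prime_ge_2_nat[OF p] assms(3) by (cases "p = 2") auto
  have De: "p - 1 = D * e" unfolding e_def D_def by simp
  have "e \<ge> 2"
  proof -
    have "e \<noteq> 0" using De \<open>p \<ge> 3\<close> by (intro notI) simp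
    moreover have "e \<noteq> 1" using De assms(3) unfolding D_def by (metis gcd_dvd1 mult.right_neutral)
    ultimately show ?thesis by simp
  qed
  have "coprime (p - 1) p" using p by (intro coprime_diff_one_left_nat) (simp add: prime_gt_0_nat)
  moreover obtain r where "p - 1 = D * r" unfolding D_def by (metis gcd_dvd2 dvdE)
  ultimately have "coprime D (p ^ \<tau>)" by simp
  then have "D * p ^ \<tau> dvd k"
    unfolding \<tau>_def D_def by (intro divides_mult multiplicity_dvd) simp_all
  then have "p ^ \<tau> * D \<le> k" using assms(2) by (simp add: dvd_imp_le mult.commute)
  have "D * e \<le> 2 * (D * (e - 1))" using \<open>e \<ge> 2\<close> by (cases e) auto
  then have "2 * p \<le> 3 * (2 * (D * (e - 1)))" using \<open>p \<ge> 3\<close> De by linarith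
  then have "p ^ \<tau> * (2 * p) \<le> p ^ \<tau> * (3 * (2 * (D * (e - 1))))" by (rule mult_le_mono2)
  then have "p ^ Suc \<tau> \<le> 3 * (p ^ \<tau> * D) * (e - 1)" by (simp add: ac_simps)
  also have "\<dots> \<le> 3 * k * (e - 1)" using \<open>p ^ \<tau> * D \<le> k\<close> by simp
  finally show ?thesis unfolding \<tau>_def e_def D_def .
qed

lemma int_totatives_eq:
  assumes "n > 1"
  shows "int ` totatives n = {x \<in> {0..<int n}. coprime x (int n)}"
proof (intro antisym subsetI)
  fix x assume "x \<in> int ` totatives n"
  then obtain y where y: "y \<in> totatives n" "x = int y" by auto
  then have "y \<noteq> n" using assms by (auto simp: totatives_def)
  with y show "x \<in> {x \<in> {0..<int n}. coprime x (int n)}"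
    by (auto simp: totatives_def)
next
  fix x assume x: "x \<in> {x \<in> {0..<int n}. coprime x (int n)}"
  define y where "y = nat x"
  have x_eq: "x = int y" using x by (simp add: y_def)
  then have "coprime y n" using x by simp
  then have "y \<noteq> 0" using assms by (intro notI) simp
  with \<open>coprime y n\<close> x x_eq have "y \<in> totatives n" by (auto simp: totatives_def)
  with x_eq show "x \<in> int ` totatives n" by blast
qed

lemma ex_nat_cong_mult_eq:
  fixes b r q :: int
  assumes "coprime b q" and "q > 0"
  obtains u :: nat where "[b * int u = r] (mod q)"
proof -
  obtain x where x: "[b * x = 1] (mod q)" using cong_solve_coprime_int[OF assms(1)] by blast
  define u where "u = nat ((r * x) mod q)"
  have "[b * int u = b * (r * x)] (mod q)"
    unfolding u_def using assms(2) by (intro cong_mult cong_refl) (simp add: cong_def)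
  also have "b * (r * x) = r * (b * x)" by (simp add: algebra_simps)
  also have "[r * (b * x) = r * 1] (mod q)" by (intro cong_mult cong_refl x)
  finally show ?thesis using that by simp
qed

lemma power_cong_one_plus_mult:
  fixes z q c p :: int
  assumes "z - 1 = q * c" and "p dvd q"
  shows "[z ^ u = 1 + q * c * int u] (mod q * p)"
proof (induction u)
  case 0 then show ?case by simp
next
  case (Suc u)
  have "[z ^ Suc u = (1 + q * c * int u) * z] (mod q * p)"
    using Suc by (simp add: cong_mult mult.commute)
  also have "(1 + q * c * int u) * z = 1 + q * c * int (Suc u) + q * q * (c * c * int u)"
    using assms(1) by (simp add: algebra_simps)
  also have "[\<dots> = 1 + q * c * int (Suc u) + 0] (mod q * p)"
    using assms(2) by (intro cong_add cong_refl) (simp add: cong_0_iff mult.assoc mult_dvd_mono)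
  finally show ?case by simp
qed

section \<open>Sumsets modulo prime powers\<close>

definition sumset_mod :: "int \<Rightarrow> int set \<Rightarrow> int set \<Rightarrow> int set" where
  "sumset_mod q A B = {(x + y) mod q | x y. x \<in> A \<and> y \<in> B}"

definition incong_mod :: "int \<Rightarrow> int set \<Rightarrow> bool" where
  "incong_mod p B \<longleftrightarrow> (\<forall>x\<in>B. \<forall>y\<in>B. [x = y] (mod p) \<longrightarrow> x = y)"

lemma sumset_mod_subset: "q > 0 \<Longrightarrow> sumset_mod q A B \<subseteq> {0..<q}"
  unfolding sumset_mod_def by auto

lemma sumset_mod_full_left:
  assumes "q > 0" and "B \<noteq> {}"
  shows "sumset_mod q {0..<q} B = {0..<q}"
proof (rule antisym)
  show "sumset_mod q {0..<q} B \<subseteq> {0..<q}" using assms(1) by (rule sumset_mod_subset)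
  show "{0..<q} \<subseteq> sumset_mod q {0..<q} B"
  proof
    fix y assume y: "y \<in> {0..<q}"
    obtain b where b: "b \<in> B" using assms(2) by auto
    have "(y - b) mod q \<in> {0..<q}" using assms(1) by simp
    moreover have "((y - b) mod q + b) mod q = y" using y by (simp add: mod_add_left_eq)
    ultimately show "y \<in> sumset_mod q {0..<q} B" unfolding sumset_mod_def using b by force
  qed
qed

lemma inj_on_add_mod:
  fixes q e :: int
  assumes "B \<subseteq> {0..<q}"
  shows "inj_on (\<lambda>b. (b + e) mod q) B"
proof (rule inj_onI)
  fix x y assume xy: "x \<in> B" "y \<in> B" "(x + e) mod q = (y + e) mod q"
  then have "[x + e = y + e] (mod q)" by (simp add: cong_def)
  then have "[x = y] (mod q)" by (simp add: cong_add_rcancel)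
  then have "x mod q = y mod q" by (simp add: cong_def)
  moreover have "x mod q = x" "y mod q = y" using xy(1,2) assms by auto
  ultimately show "x = y" by simp
qed

lemma add_mod_closed_eq_full:
  fixes q u :: int
  assumes "q > 0" and "coprime u q" and "A \<subseteq> {0..<q}" and "A \<noteq> {}"
    and closed: "\<And>a. a \<in> A \<Longrightarrow> (a + u) mod q \<in> A"
  shows "A = {0..<q}"
proof
  show "A \<subseteq> {0..<q}" by fact
  obtain a0 where a0: "a0 \<in> A" using assms(4) by auto
  have multiples: "(a0 + int j * u) mod q \<in> A" for j
  proof (induction j)
    case 0 then show ?case using a0 assms(3) by auto
  next
    case (Suc j)
    have "a0 + int (Suc j) * u = (a0 + int j * u) + u" by (simp add: algebra_simps)
    then have "(a0 + int (Suc j) * u) mod q = ((a0 + int j * u) mod q + u) mod q"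
      by (simp add: mod_add_left_eq add.assoc)
    then show ?case using closed[OF Suc] by simp
  qed
  obtain v where v: "[u * v = 1] (mod q)" using cong_solve_coprime_int[OF assms(2)] by auto
  show "{0..<q} \<subseteq> A"
  proof
    fix y assume y: "y \<in> {0..<q}"
    define j where "j = nat (((y - a0) * v) mod q)"
    have "[int j = (y - a0) * v] (mod q)" unfolding j_def using assms(1) by (simp add: cong_def)
    then have "[a0 + int j * u = a0 + (y - a0) * v * u] (mod q)"
      by (intro cong_add cong_mult cong_refl)
    also have "a0 + (y - a0) * v * u = a0 + (y - a0) * (u * v)" by (simp add: algebra_simps)
    also have "[a0 + (y - a0) * (u * v) = a0 + (y - a0) * 1] (mod q)"
      by (intro cong_add cong_mult cong_refl v)
    finally have "(a0 + int j * u) mod q = y" using y by (simp add: cong_def)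
    then show "y \<in> A" using multiples[of j] by simp
  qed
qed

lemma sumset_mod_dyson_transform:
  fixes q e :: int
  assumes "q > 0" and A: "A \<subseteq> {0..<q}" and B: "B \<subseteq> {0..<q}"
  defines "T \<equiv> \<lambda>b. (b + e) mod q"
  shows "sumset_mod q (A \<union> T ` B) {b \<in> B. T b \<in> A} \<subseteq> sumset_mod q A B"
    and "card (A \<union> T ` B) + card {b \<in> B. T b \<in> A} = card A + card B"
proof -
  define B' where "B' = {b \<in> B. T b \<in> A}"
  show "sumset_mod q (A \<union> T ` B) B' \<subseteq> sumset_mod q A B"
  proof
    fix z assume "z \<in> sumset_mod q (A \<union> T ` B) B'"
    then obtain x y where z: "z = (x + y) mod q" and x: "x \<in> A \<union> T ` B" and y: "y \<in> B'"
      unfolding sumset_mod_def by blast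
    show "z \<in> sumset_mod q A B"
    proof (cases "x \<in> A")
      case True then show ?thesis using z y unfolding sumset_mod_def B'_def by blast
    next
      case False
      then obtain b where b: "b \<in> B" "x = T b" using x by auto
      have "z = (T y + b) mod q" unfolding z b T_def by (simp add: mod_add_right_eq add_ac)
      moreover have "T y \<in> A" using y unfolding B'_def by auto
      ultimately show ?thesis using b(1) unfolding sumset_mod_def by blast
    qed
  qed
  have finite: "finite A" "finite B" using A B finite_subset by auto
  have "inj_on T B" unfolding T_def using B by (rule inj_on_add_mod)
  have "B' \<subseteq> B" unfolding B'_def by auto
  have "T ` B - A = T ` (B - B')" unfolding B'_def by auto
  then have "card (T ` B - A) = card B - card B'"
    using \<open>inj_on T B\<close> \<open>B' \<subseteq> B\<close> finite
    by (simp add: card_image inj_on_subset card_Diff_subset finite_subset)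
  moreover have "card (A \<union> T ` B) = card A + card (T ` B - A)"
    using finite by (metis Un_Diff_cancel card_Un_disjoint Diff_disjoint finite_Diff finite_imageI)
  moreover have "card B' \<le> card B" using \<open>B' \<subseteq> B\<close> finite by (intro card_mono)
  ultimately show "card (A \<union> T ` B) + card B' = card A + card B" by simp
qed

text \<open>Dyson's transform works here because the difference of two elements of \<open>B\<close> is a unit,
  and translation by a unit maps no proper nonempty subset of \<open>\<int>/p\<^sup>m\<close> into itself.\<close>

theorem cauchy_davenport_prime_power:
  fixes p :: int and m :: nat
  assumes p: "prime p" and "A \<subseteq> {0..<p ^ m}" and "A \<noteq> {}" and "B \<subseteq> {0..<p ^ m}" and "B \<noteq> {}"
    and "incong_mod p B"
  shows "sumset_mod (p ^ m) A B = {0..<p ^ m} \<or> card A + card B \<le> card (sumset_mod (p ^ m) A B) + 1"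
  using assms(2-6)
proof (induction "card B" arbitrary: A B rule: less_induct)
  case less
  define q where "q = p ^ m"
  have "q > 0" unfolding q_def using p by (simp add: prime_gt_0_int)
  have finite: "finite A" "finite B" "finite (sumset_mod q A B)"
    using less.prems(1,3) sumset_mod_subset[OF \<open>q > 0\<close>, of A B] unfolding q_def
    by (meson finite_atLeastLessThan_int finite_subset)+
  show ?case
  proof (cases "card B = 1 \<or> sumset_mod q A B = {0..<q}")
    case True
    moreover have "card (sumset_mod q A {b}) = card A" for b
    proof -
      have "sumset_mod q A {b} = (\<lambda>x. (x + b) mod q) ` A" unfolding sumset_mod_def by auto
      then show ?thesis using inj_on_add_mod less.prems(1) unfolding q_def by (simp add: card_image)
    qed
    ultimately show ?thesis unfolding q_def by (auto simp: card_Suc_eq)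
  next
    case False
    then have "card B \<ge> 2" using less.prems(4) finite(2) by (cases "card B") auto
    then obtain b0 b1 where b01: "b0 \<in> B" "b1 \<in> B" "b0 \<noteq> b1"
      by (metis card_le_Suc0_iff_eq not_less_eq_eq numeral_2_eq_2 finite(2))
    then have "\<not> p dvd b1 - b0"
      using less.prems(5) unfolding incong_mod_def by (metis cong_iff_dvd_diff)
    then have "coprime (b1 - b0) q" unfolding q_def
      using p by (simp add: prime_imp_coprime coprime_commute)
    then obtain a where a: "a \<in> A" and "(a + (b1 - b0)) mod q \<notin> A"
      using add_mod_closed_eq_full[OF \<open>q > 0\<close> _ less.prems(1)[folded q_def] less.prems(2)]
        sumset_mod_full_left[OF \<open>q > 0\<close> less.prems(4)] False by metis
    define T where "T = (\<lambda>b. (b + (a - b0)) mod q)"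
    define A' where "A' = A \<union> T ` B"
    define B' where "B' = {b \<in> B. T b \<in> A}"
    have "b1 \<notin> B'" using \<open>(a + (b1 - b0)) mod q \<notin> A\<close> unfolding B'_def T_def by (simp add: algebra_simps)
    moreover have "b0 \<in> B'" using b01(1) a less.prems(1) unfolding B'_def T_def q_def by auto
    moreover have "B' \<subseteq> B" unfolding B'_def by auto
    ultimately have "card B' < card B" using b01(2) finite(2) by (metis psubsetI psubset_card_mono)
    moreover have "A' \<subseteq> {0..<p ^ m}" unfolding A'_def T_def using less.prems(1) \<open>q > 0\<close> q_def by auto
    moreover have "incong_mod p B'" using less.prems(5) \<open>B' \<subseteq> B\<close> unfolding incong_mod_def by blast
    ultimately have IH: "sumset_mod q A' B' = {0..<q} \<or> card A' + card B' \<le> card (sumset_mod q A' B') + 1"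
      using less.hyps a \<open>b0 \<in> B'\<close> \<open>B' \<subseteq> B\<close> less.prems(3) unfolding A'_def q_def by blast
    have sub: "sumset_mod q A' B' \<subseteq> sumset_mod q A B"
      and card: "card A' + card B' = card A + card B"
      using sumset_mod_dyson_transform[OF \<open>q > 0\<close> less.prems(1,3)[folded q_def]]
      unfolding A'_def B'_def T_def by blast+
    have "card (sumset_mod q A' B') \<le> card (sumset_mod q A B)" using card_mono[OF finite(3) sub] .
    then show ?thesis using IH False sub card sumset_mod_subset[OF \<open>q > 0\<close>, of A B]
      unfolding q_def by auto
  qed
qed

definition sums_mod :: "int \<Rightarrow> ('a \<Rightarrow> int set) \<Rightarrow> 'a set \<Rightarrow> int set" where
  "sums_mod q B J = {y \<in> {0..<q}. \<exists>f. (\<forall>j\<in>J. f j \<in> B j) \<and> y = (\<Sum>j\<in>J. f j) mod q}"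

lemma sums_mod_empty: "q > 0 \<Longrightarrow> sums_mod q B {} = {0}"
  unfolding sums_mod_def by auto

lemma sums_mod_insert:
  assumes "q > 0" "j \<notin> J" "finite J"
  shows "sums_mod q B (insert j J) = sumset_mod q (sums_mod q B J) (B j)"
proof (rule antisym)
  show "sums_mod q B (insert j J) \<subseteq> sumset_mod q (sums_mod q B J) (B j)"
  proof
    fix y assume "y \<in> sums_mod q B (insert j J)"
    then obtain f where f: "\<forall>i\<in>insert j J. f i \<in> B i" "y = (\<Sum>i\<in>insert j J. f i) mod q"
      unfolding sums_mod_def by blast
    have "y = ((\<Sum>i\<in>J. f i) mod q + f j) mod q"
      using f(2) assms by (simp add: mod_add_right_eq add.commute)
    moreover have "(\<Sum>i\<in>J. f i) mod q \<in> sums_mod q B J"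
      unfolding sums_mod_def using f(1) assms(1) by auto
    ultimately show "y \<in> sumset_mod q (sums_mod q B J) (B j)"
      unfolding sumset_mod_def using f(1) by blast
  qed
  show "sumset_mod q (sums_mod q B J) (B j) \<subseteq> sums_mod q B (insert j J)"
  proof
    fix y assume "y \<in> sumset_mod q (sums_mod q B J) (B j)"
    then obtain x b where y: "y = (x + b) mod q" and x: "x \<in> sums_mod q B J" and b: "b \<in> B j"
      unfolding sumset_mod_def by blast
    obtain f where f: "\<forall>i\<in>J. f i \<in> B i" "x = (\<Sum>i\<in>J. f i) mod q"
      using x unfolding sums_mod_def by blast
    have "(\<Sum>i\<in>J. (f(j := b)) i) = (\<Sum>i\<in>J. f i)" using assms(2) by (intro sum.cong) auto
    then have "y = (\<Sum>i\<in>insert j J. (f(j := b)) i) mod q"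
      unfolding y f(2) using assms by (simp add: mod_add_left_eq mod_add_right_eq add.commute)
    moreover have "\<forall>i\<in>insert j J. (f(j := b)) i \<in> B i" using f(1) b by auto
    moreover have "y \<in> {0..<q}" unfolding y using assms(1) by simp
    ultimately show "y \<in> sums_mod q B (insert j J)" unfolding sums_mod_def by blast
  qed
qed

lemma sums_mod_full_or_card_ge:
  fixes p :: int and m e :: nat and B :: "'a \<Rightarrow> int set"
  assumes p: "prime p" and "finite J"
    and B: "\<And>j. j \<in> J \<Longrightarrow> B j \<subseteq> {0..<p ^ m} \<and> B j \<noteq> {} \<and> incong_mod p (B j) \<and> e \<le> card (B j)"
  shows "sums_mod (p ^ m) B J = {0..<p ^ m} \<or> card J * (e - 1) + 1 \<le> card (sums_mod (p ^ m) B J)"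
  using \<open>finite J\<close> B
proof (induction J rule: finite_induct)
  case empty
  then show ?case using p by (simp add: sums_mod_empty prime_gt_0_int)
next
  case (insert j J)
  have "p ^ m > 0" using p by (simp add: prime_gt_0_int)
  have Bj: "B j \<subseteq> {0..<p ^ m}" "B j \<noteq> {}" "incong_mod p (B j)" "e \<le> card (B j)"
    using insert.prems by auto
  have "finite (B j)" using Bj(1) finite_subset by blast
  have eq: "sums_mod (p ^ m) B (insert j J) = sumset_mod (p ^ m) (sums_mod (p ^ m) B J) (B j)"
    using sums_mod_insert[OF \<open>p ^ m > 0\<close> insert.hyps(2,1)] .
  have sub: "sums_mod (p ^ m) B J \<subseteq> {0..<p ^ m}" unfolding sums_mod_def by auto
  have "sums_mod (p ^ m) B J = {0..<p ^ m} \<or> card J * (e - 1) + 1 \<le> card (sums_mod (p ^ m) B J)"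
    using insert.IH insert.prems by blast
  then show ?case
  proof
    assume "sums_mod (p ^ m) B J = {0..<p ^ m}"
    then show ?thesis using eq sumset_mod_full_left[OF \<open>p ^ m > 0\<close> Bj(2)] by simp
  next
    assume IH: "card J * (e - 1) + 1 \<le> card (sums_mod (p ^ m) B J)"
    then have "sums_mod (p ^ m) B J \<noteq> {}" by auto
    from cauchy_davenport_prime_power[OF p sub this Bj(1-3)] show ?thesis
    proof
      assume CD: "card (sums_mod (p ^ m) B J) + card (B j)
        \<le> card (sumset_mod (p ^ m) (sums_mod (p ^ m) B J) (B j)) + 1"
      have "card (B j) > 0" using Bj(2) \<open>finite (B j)\<close> by (simp add: card_gt_0_iff)
      then have "e - 1 + 1 \<le> card (B j)" using Bj(4) by linarith
      moreover have "card (insert j J) * (e - 1) = card J * (e - 1) + (e - 1)"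
        using insert.hyps by simp
      ultimately have "card (insert j J) * (e - 1) + 1 \<le> card (sums_mod (p ^ m) B (insert j J))"
        unfolding eq using IH CD by linarith
      then show ?thesis ..
    qed (simp add: eq)
  qed
qed

lemma sums_mod_eq_full:
  fixes p :: int and m e :: nat and B :: "'a \<Rightarrow> int set"
  assumes p: "prime p" and "finite J"
    and B: "\<And>j. j \<in> J \<Longrightarrow> B j \<subseteq> {0..<p ^ m} \<and> B j \<noteq> {} \<and> incong_mod p (B j) \<and> e \<le> card (B j)"
    and large: "nat (p ^ m) \<le> card J * (e - 1) + 1"
  shows "sums_mod (p ^ m) B J = {0..<p ^ m}"
proof -
  have sub: "sums_mod (p ^ m) B J \<subseteq> {0..<p ^ m}" unfolding sums_mod_def by auto
  from sums_mod_full_or_card_ge[OF p \<open>finite J\<close> B] show ?thesis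
  proof
    assume "card J * (e - 1) + 1 \<le> card (sums_mod (p ^ m) B J)"
    then have "card {0..<p ^ m} \<le> card (sums_mod (p ^ m) B J)" using large by simp
    then show ?thesis using sub by (intro card_seteq) auto
  qed
qed

lemma bij_betw_PiE_compose:
  assumes "bij_betw f A B"
  shows "bij_betw (\<lambda>x. restrict (\<lambda>j. f (x j)) I) (I \<rightarrow>\<^sub>E A) (I \<rightarrow>\<^sub>E B)"
proof (rule bij_betwI[where g = "\<lambda>y. restrict (\<lambda>j. inv_into A f (y j)) I"])
  show "(\<lambda>x. restrict (\<lambda>j. f (x j)) I) \<in> (I \<rightarrow>\<^sub>E A) \<rightarrow> (I \<rightarrow>\<^sub>E B)"
    using bij_betwE[OF assms] by auto
  show "(\<lambda>y. restrict (\<lambda>j. inv_into A f (y j)) I) \<in> (I \<rightarrow>\<^sub>E B) \<rightarrow> (I \<rightarrow>\<^sub>E A)"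
    using bij_betwE[OF bij_betw_inv_into[OF assms]] by auto
  show "restrict (\<lambda>j. inv_into A f (restrict (\<lambda>j. f (x j)) I j)) I = x" if "x \<in> I \<rightarrow>\<^sub>E A" for x
    using that bij_betw_inv_into_left[OF assms] by (intro PiE_ext[OF _ that]) (auto simp: PiE_iff)
  show "restrict (\<lambda>j. f (restrict (\<lambda>j. inv_into A f (y j)) I j)) I = y" if "y \<in> I \<rightarrow>\<^sub>E B" for y
    using that bij_betw_inv_into_right[OF assms] by (intro PiE_ext[OF _ that]) (auto simp: PiE_iff)
qed

lemma card_PiE_insert_filter:
  assumes "finite I" and "j \<notin> I" and "finite A"
  shows "card {x \<in> insert j I \<rightarrow>\<^sub>E A. P x} = (\<Sum>g \<in> I \<rightarrow>\<^sub>E A. card {y \<in> A. P (g(j := y))})"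
proof -
  define S where "S = (SIGMA g : I \<rightarrow>\<^sub>E A. {y \<in> A. P (g(j := y))})"
  have "{x \<in> insert j I \<rightarrow>\<^sub>E A. P x} = (\<lambda>(y, g). g(j := y)) ` (prod.swap ` S)"
    unfolding S_def PiE_insert_eq by auto
  also have "card \<dots> = card S"
  proof -
    have "inj_on (\<lambda>(y, g). g(j := y)) (prod.swap ` S)"
      by (rule inj_on_subset[OF inj_combinator[OF assms(2)]]) (auto simp: S_def)
    then show ?thesis by (simp add: card_image)
  qed
  also have "\<dots> = (\<Sum>g \<in> I \<rightarrow>\<^sub>E A. card {y \<in> A. P (g(j := y))})"
    unfolding S_def using assms by (simp add: finite_PiE)
  finally show ?thesis .
qed

lemma card_PiE_mod_fibre:
  fixes N c :: nat
  assumes "finite I" and y: "y \<in> I \<rightarrow>\<^sub>E {..<N}"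
  shows "card {x. x \<in> I \<rightarrow>\<^sub>E {..<c * N} \<and> restrict (\<lambda>j. x j mod N) I = y} = c ^ card I"
proof -
  have "{x. x \<in> I \<rightarrow>\<^sub>E {..<c * N} \<and> restrict (\<lambda>j. x j mod N) I = y}
      = (\<Pi>\<^sub>E j\<in>I. {t. t < c * N \<and> t mod N = y j})"
    using y by (auto simp: PiE_iff fun_eq_iff extensional_def)
  also have "card \<dots> = (\<Prod>j\<in>I. card {t. t < c * N \<and> t mod N = y j})"
    using assms(1) by (rule card_PiE)
  also have "\<dots> = (\<Prod>j\<in>I. c)"
    using y by (intro prod.cong refl card_less_mult_mod_eq) auto
  finally show ?thesis by simp
qed

lemma sum_PiE_mod_restrict:
  fixes N c :: nat and \<psi> :: "('a \<Rightarrow> nat) \<Rightarrow> 'b::comm_semiring_1"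
  assumes "finite I" and "N > 0"
  shows "(\<Sum>x \<in> I \<rightarrow>\<^sub>E {..<c * N}. \<psi> (restrict (\<lambda>j. x j mod N) I)) =
         of_nat (c ^ card I) * (\<Sum>y \<in> I \<rightarrow>\<^sub>E {..<N}. \<psi> y)"
proof -
  define G where "G = (\<lambda>x::'a \<Rightarrow> nat. restrict (\<lambda>j. x j mod N) I)"
  have "G ` (I \<rightarrow>\<^sub>E {..<c * N}) \<subseteq> I \<rightarrow>\<^sub>E {..<N}" unfolding G_def using assms(2) by auto
  then have "(\<Sum>x \<in> I \<rightarrow>\<^sub>E {..<c * N}. \<psi> (G x)) =
      (\<Sum>y \<in> I \<rightarrow>\<^sub>E {..<N}. \<Sum>x \<in> {x. x \<in> I \<rightarrow>\<^sub>E {..<c * N} \<and> G x = y}. \<psi> (G x))"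
    using assms(1) by (intro sum.group[symmetric]) (auto intro: finite_PiE)
  also have "\<dots> = (\<Sum>y \<in> I \<rightarrow>\<^sub>E {..<N}. of_nat (c ^ card I) * \<psi> y)"
  proof (rule sum.cong[OF refl])
    fix y assume "y \<in> I \<rightarrow>\<^sub>E {..<N}"
    then show "(\<Sum>x \<in> {x. x \<in> I \<rightarrow>\<^sub>E {..<c * N} \<and> G x = y}. \<psi> (G x)) = of_nat (c ^ card I) * \<psi> y"
      using card_PiE_mod_fibre[OF assms(1)] unfolding G_def by simp
  qed
  finally show ?thesis unfolding G_def by (simp add: sum_distrib_left)
qed

section \<open>Diagonal forms in the exponents of a primitive root\<close>

locale primroot_prime_powers =
  fixes p g :: nat
  assumes prime: "prime p" and primroot: "\<forall>m>0. residue_primroot (p ^ m) g"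
begin

definition monomial_solvable :: "nat \<Rightarrow> int \<Rightarrow> nat \<Rightarrow> int \<Rightarrow> bool" where
  "monomial_solvable k c m v \<longleftrightarrow> (\<exists>t. [c * int g ^ (k * t) = v] (mod int p ^ m))"

definition exp_form :: "nat \<Rightarrow> (nat \<Rightarrow> int) \<Rightarrow> nat set \<Rightarrow> (nat \<Rightarrow> nat) \<Rightarrow> int" where
  "exp_form k a I i = (\<Sum>j\<in>I. a j * int g ^ (k * i j))"

lemma primroot_pow_cong_iff:
  assumes "m > 0"
  shows "[int g ^ x = int g ^ y] (mod int p ^ m) \<longleftrightarrow> [x = y] (mod totient (p ^ m))"
proof -
  have "coprime (p ^ m) g" "ord (p ^ m) g = totient (p ^ m)"
    using primroot assms by (auto simp: residue_primroot_def)
  have "[int g ^ x = int g ^ y] (mod int p ^ m) \<longleftrightarrow> [g ^ x = g ^ y] (mod p ^ m)"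
    by (metis cong_int_iff of_nat_power)
  also have "\<dots> \<longleftrightarrow> [x = y] (mod totient (p ^ m))"
    using order_divides_expdiff[OF \<open>coprime (p ^ m) g\<close>] \<open>ord (p ^ m) g = totient (p ^ m)\<close> by simp
  finally show ?thesis .
qed

lemma bij_betw_primroot_powers_units:
  assumes "m > 0"
  shows "bij_betw (\<lambda>i. int (g ^ i mod p ^ m)) {..<totient (p ^ m)}
           {x \<in> {0..<int p ^ m}. coprime x (int p ^ m)}"
proof -
  have "p ^ m > 1" using prime_gt_1_nat[OF prime] assms by (intro one_less_power) simp_all
  then have b1: "bij_betw (\<lambda>i. g ^ i mod p ^ m) {..<totient (p ^ m)} (totatives (p ^ m))"
    using residue_primroot_is_generator primroot assms by simp
  have b2: "bij_betw int (totatives (p ^ m)) {x \<in> {0..<int p ^ m}. coprime x (int p ^ m)}"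
    using int_totatives_eq[OF \<open>p ^ m > 1\<close>] by (simp add: bij_betw_def inj_on_def)
  show ?thesis using bij_betw_trans[OF b1 b2] by (simp add: comp_def)
qed

lemma M_count_eq_card_exponents:
  assumes "m > 0"
  shows "M_count k s a n p m = card {i \<in> {..<s} \<rightarrow>\<^sub>E {..<totient (p ^ m)}.
            [exp_form k a {..<s} i = n] (mod int p ^ m)}"
proof -
  define U where "U = {x \<in> {0..<int p ^ m}. coprime x (int p ^ m)}"
  define h where "h = (\<lambda>i::nat\<Rightarrow>nat. restrict (\<lambda>j. int (g ^ (i j) mod p ^ m)) {..<s})"
  have bij: "bij_betw h ({..<s} \<rightarrow>\<^sub>E {..<totient (p ^ m)}) ({..<s} \<rightarrow>\<^sub>E U)"
    unfolding h_def U_def by (rule bij_betw_PiE_compose[OF bij_betw_primroot_powers_units[OF assms]])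
  have h_cong: "[(\<Sum>j<s. a j * h i j ^ k) = exp_form k a {..<s} i] (mod int p ^ m)" for i
    unfolding exp_form_def
  proof (rule cong_sum, rule cong_mult[OF cong_refl])
    fix j assume "j \<in> {..<s}"
    then have "[h i j = int g ^ i j] (mod int p ^ m)" unfolding h_def by (simp add: cong_def zmod_int)
    then have "[h i j ^ k = (int g ^ i j) ^ k] (mod int p ^ m)" by (rule cong_pow)
    then show "[h i j ^ k = int g ^ (k * i j)] (mod int p ^ m)"
      by (simp add: power_mult[symmetric] mult.commute)
  qed
  have "[(\<Sum>j<s. a j * h i j ^ k) = n] (mod int p ^ m) \<longleftrightarrow> [exp_form k a {..<s} i = n] (mod int p ^ m)"
    for i using h_cong[of i] cong_trans cong_sym by blast
  then have "bij_betw h {i \<in> {..<s} \<rightarrow>\<^sub>E {..<totient (p ^ m)}. [exp_form k a {..<s} i = n] (mod int p ^ m)}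
      {x \<in> {..<s} \<rightarrow>\<^sub>E U. [(\<Sum>j<s. a j * x j ^ k) = n] (mod int p ^ m)}"
    by (rule bij_betw_Collect[OF bij])
  then have "card {i \<in> {..<s} \<rightarrow>\<^sub>E {..<totient (p ^ m)}. [exp_form k a {..<s} i = n] (mod int p ^ m)}
      = card {x \<in> {..<s} \<rightarrow>\<^sub>E U. [(\<Sum>j<s. a j * x j ^ k) = n] (mod int p ^ m)}"
    by (rule bij_betw_same_card)
  also have "{x \<in> {..<s} \<rightarrow>\<^sub>E U. [(\<Sum>j<s. a j * x j ^ k) = n] (mod int p ^ m)} =
      {x \<in> {..<s} \<rightarrow>\<^sub>E {0..<int p ^ m}. (\<forall>j<s. coprime (x j) (int p ^ m)) \<and>
        [(\<Sum>j<s. a j * x j ^ k) = n] (mod (int p ^ m))}"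
    unfolding U_def by (auto simp: PiE_iff)
  finally show ?thesis unfolding M_count_def ..
qed

lemma monomial_solvable_cong:
  "[v = v'] (mod int p ^ m) \<Longrightarrow> monomial_solvable k c m v \<longleftrightarrow> monomial_solvable k c m v'"
  unfolding monomial_solvable_def using cong_trans cong_sym by blast

lemma monomial_solvable_Suc_imp:
  assumes "monomial_solvable k c (Suc m) v"
  shows "monomial_solvable k c m v"
proof -
  obtain t where "[c * int g ^ (k * t) = v] (mod int p ^ Suc m)"
    using assms unfolding monomial_solvable_def by blast
  moreover have "int p ^ m dvd int p ^ Suc m" by (simp add: le_imp_power_dvd)
  ultimately show ?thesis unfolding monomial_solvable_def using cong_dvd_modulus by blast
qed

lemma card_exponents_monomial:
  assumes "m > 0" and "coprime c (int p)"
  shows "card {t \<in> {..<totient (p ^ m)}. [c * int g ^ (k * t) + S = n] (mod int p ^ m)} =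
         (if monomial_solvable k c m (n - S) then gcd k (totient (p ^ m)) else 0)"
proof -
  define N where "N = totient (p ^ m)"
  define L where "L = N div gcd k N"
  have "N > 0" unfolding N_def using prime by (simp add: prime_gt_0_nat)
  have shift: "[c * int g ^ (k * t) + S = n] (mod int p ^ m) \<longleftrightarrow>
      [c * int g ^ (k * t) = n - S] (mod int p ^ m)" for t
    by (simp add: cong_iff_dvd_diff algebra_simps)
  show ?thesis
  proof (cases "monomial_solvable k c m (n - S)")
    case False
    then show ?thesis unfolding N_def[symmetric] monomial_solvable_def shift by auto
  next
    case True
    then obtain t1 where t1: "[c * int g ^ (k * t1) = n - S] (mod int p ^ m)"
      unfolding monomial_solvable_def by blast
    have "coprime c (int p ^ m)" using assms(2) by simp
    have "{t \<in> {..<N}. [c * int g ^ (k * t) + S = n] (mod int p ^ m)} =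
        {t. t < gcd k N * L \<and> t mod L = t1 mod L}"
    proof (rule Collect_cong)
      fix t
      have "[c * int g ^ (k * t) + S = n] (mod int p ^ m) \<longleftrightarrow>
          [c * int g ^ (k * t) = c * int g ^ (k * t1)] (mod int p ^ m)"
        unfolding shift using t1 cong_trans cong_sym by blast
      also have "\<dots> \<longleftrightarrow> [int g ^ (k * t) = int g ^ (k * t1)] (mod int p ^ m)"
        using \<open>coprime c (int p ^ m)\<close> by (rule cong_mult_lcancel)
      also have "\<dots> \<longleftrightarrow> [k * t = k * t1] (mod N)"
        unfolding N_def by (rule primroot_pow_cong_iff[OF assms(1)])
      also have "\<dots> \<longleftrightarrow> t mod L = t1 mod L"
        unfolding L_def cong_mult_lcancel_gcd_nat[OF \<open>N > 0\<close>] by (simp add: cong_def)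
      finally show "(t \<in> {..<N} \<and> [c * int g ^ (k * t) + S = n] (mod int p ^ m)) \<longleftrightarrow>
          (t < gcd k N * L \<and> t mod L = t1 mod L)" by (simp add: L_def)
    qed
    also have "card \<dots> = gcd k N"
      using \<open>N > 0\<close> by (intro card_less_mult_mod_eq) (simp add: L_def div_greater_zero_iff)
    finally show ?thesis using True unfolding N_def by simp
  qed
qed

lemma M_count_eq_sum:
  assumes "m > 0" and "j0 < s" and "coprime (a j0) (int p)"
  shows "M_count k s a n p m =
    (\<Sum>i \<in> ({..<s} - {j0}) \<rightarrow>\<^sub>E {..<totient (p ^ m)}.
        if monomial_solvable k (a j0) m (n - exp_form k a ({..<s} - {j0}) i)
        then gcd k (totient (p ^ m)) else 0)"
proof -
  define I where "I = {..<s} - {j0}"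
  define N where "N = totient (p ^ m)"
  have s: "{..<s} = insert j0 I" and "j0 \<notin> I" and "finite I"
    unfolding I_def using assms(2) by auto
  have split: "exp_form k a (insert j0 I) (i(j0 := t)) = a j0 * int g ^ (k * t) + exp_form k a I i"
    for i t
  proof -
    have "exp_form k a I (i(j0 := t)) = exp_form k a I i"
      unfolding exp_form_def using \<open>j0 \<notin> I\<close> by (intro sum.cong) auto
    then show ?thesis using \<open>finite I\<close> \<open>j0 \<notin> I\<close> by (simp add: exp_form_def)
  qed
  have "M_count k s a n p m = card {i \<in> insert j0 I \<rightarrow>\<^sub>E {..<N}.
      [exp_form k a (insert j0 I) i = n] (mod int p ^ m)}"
    unfolding M_count_eq_card_exponents[OF assms(1)] s N_def ..
  also have "\<dots> = (\<Sum>i \<in> I \<rightarrow>\<^sub>E {..<N}. card {t \<in> {..<N}.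
      [a j0 * int g ^ (k * t) + exp_form k a I i = n] (mod int p ^ m)})"
    unfolding card_PiE_insert_filter[OF \<open>finite I\<close> \<open>j0 \<notin> I\<close> finite_lessThan] split ..
  also have "\<dots> = (\<Sum>i \<in> I \<rightarrow>\<^sub>E {..<N}.
      if monomial_solvable k (a j0) m (n - exp_form k a I i) then gcd k N else 0)"
    unfolding N_def card_exponents_monomial[OF assms(1,3)] ..
  finally show ?thesis unfolding I_def N_def .
qed

lemma exp_form_cong_mod_totient:
  assumes "m > 0"
  shows "[exp_form k a I i = exp_form k a I (restrict (\<lambda>j. i j mod totient (p ^ m)) I)] (mod int p ^ m)"
  unfolding exp_form_def
proof (rule cong_sum, rule cong_mult[OF cong_refl])
  fix j assume "j \<in> I"
  have "[k * i j = k * (i j mod totient (p ^ m))] (mod totient (p ^ m))"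
    by (simp add: cong_def mod_mult_right_eq)
  then show "[int g ^ (k * i j) = int g ^ (k * restrict (\<lambda>j. i j mod totient (p ^ m)) I j)] (mod int p ^ m)"
    using \<open>j \<in> I\<close> primroot_pow_cong_iff[OF assms] by simp
qed

lemma primroot_pow_sub_one_exact:
  assumes "m > 0" and "\<not> p dvd k div gcd k (totient (p ^ m))"
  obtains z where "int g ^ (k * (totient (p ^ m) div gcd k (totient (p ^ m)))) - 1 = int p ^ m * z"
    and "\<not> int p dvd z"
proof -
  define N where "N = totient (p ^ m)"
  define L where "L = N div gcd k N"
  define k' where "k' = k div gcd k N"
  have "N > 0" unfolding N_def using prime by (simp add: prime_gt_0_nat)
  have kL: "k * L = k' * N" unfolding k'_def L_def
    by (metis dvd_div_mult gcd_dvd1 gcd_dvd2 mult.commute)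
  have "[k * L = 0] (mod N)" unfolding kL by (simp add: cong_def)
  then have "[int g ^ (k * L) = int g ^ 0] (mod int p ^ m)"
    using primroot_pow_cong_iff[OF assms(1)] unfolding N_def by blast
  then obtain z where z: "int g ^ (k * L) - 1 = int p ^ m * z"
    by (metis cong_iff_dvd_diff dvd_def power_0)
  have "\<not> [int g ^ (k * L) = int g ^ 0] (mod int p ^ Suc m)"
  proof
    assume "[int g ^ (k * L) = int g ^ 0] (mod int p ^ Suc m)"
    then have "[k * L = 0] (mod totient (p ^ Suc m))"
      using primroot_pow_cong_iff[of "Suc m"] by blast
    then have "p * N dvd k' * N"
      unfolding kL totient_prime_power_Suc_eq_mult[OF prime assms(1)] N_def by (simp add: cong_0_iff)
    then show False using \<open>N > 0\<close> assms(2) unfolding k'_def N_def by simp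
  qed
  then have "\<not> int p dvd z"
    using z by (auto simp: cong_iff_dvd_diff mult_dvd_mono)
  with z show ?thesis using that unfolding L_def N_def by blast
qed

text \<open>A solution \<open>t\<close> modulo \<open>p\<^sup>m\<close> is corrected to \<open>t + L u\<close>, where \<open>g\<^sup>k\<^sup>L = 1 + p\<^sup>m z\<close> with
  \<open>z\<close> prime to \<open>p\<close>: this moves the value by \<open>p\<^sup>m w z u\<close> modulo \<open>p\<^sup>m\<^sup>+\<^sup>1\<close>, and \<open>u\<close> is solved for.\<close>

lemma monomial_solvable_Suc_iff:
  assumes "m > 0" and "coprime c (int p)" and "\<not> p dvd k div gcd k (totient (p ^ m))"
  shows "monomial_solvable k c (Suc m) v \<longleftrightarrow> monomial_solvable k c m v"
proof
  assume "monomial_solvable k c m v"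
  then obtain t where t: "[c * int g ^ (k * t) = v] (mod int p ^ m)"
    unfolding monomial_solvable_def by blast
  define L where "L = totient (p ^ m) div gcd k (totient (p ^ m))"
  obtain z where z: "int g ^ (k * L) - 1 = int p ^ m * z" and "\<not> int p dvd z"
    using primroot_pow_sub_one_exact[OF assms(1,3)] unfolding L_def by blast
  define w where "w = c * int g ^ (k * t)"
  obtain r where r: "v - w = int p ^ m * r"
    using t unfolding w_def by (metis cong_iff_dvd_diff dvd_def cong_sym)
  have "coprime (int g) (int p)"
    using primroot prime by (auto simp: residue_primroot_def coprime_commute)
  moreover have "coprime z (int p)"
    using prime_imp_coprime[of "int p" z] \<open>\<not> int p dvd z\<close> prime by (simp add: coprime_commute)
  ultimately have "coprime (w * z) (int p)" unfolding w_def using assms(2) by simp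
  moreover have "int p > 0" using prime by (simp add: prime_gt_0_nat)
  ultimately obtain u where "[w * z * int u = r] (mod int p)" by (rule ex_nat_cong_mult_eq)
  then have "[int p ^ m * (w * z * int u) = int p ^ m * r] (mod int p ^ Suc m)"
    unfolding power_Suc2 by (rule cong_cmult_leftI)
  have "int p dvd int p ^ m" using assms(1) by simp
  then have "[(int g ^ (k * L)) ^ u = 1 + int p ^ m * z * int u] (mod int p ^ Suc m)"
    unfolding power_Suc2 by (rule power_cong_one_plus_mult[OF z])
  have "c * int g ^ (k * (t + L * u)) = w * (int g ^ (k * L)) ^ u"
    unfolding w_def by (simp add: power_add power_mult algebra_simps)
  also have "[\<dots> = w * (1 + int p ^ m * z * int u)] (mod int p ^ Suc m)"
    by (intro cong_mult cong_refl) fact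
  also have "w * (1 + int p ^ m * z * int u) = w + int p ^ m * (w * z * int u)"
    by (simp add: algebra_simps)
  also have "[\<dots> = w + int p ^ m * r] (mod int p ^ Suc m)"
    by (intro cong_add cong_refl) fact
  also have "w + int p ^ m * r = v" using r by simp
  finally show "monomial_solvable k c (Suc m) v" unfolding monomial_solvable_def by blast
qed (rule monomial_solvable_Suc_imp)

text \<open>Count the solutions by summing over the exponents of all variables but \<open>x\<^sub>j\<^sub>0\<close>: the
  summand depends on them only modulo \<open>\<phi>(p\<^sup>m)\<close>, and above the multiplicity of \<open>p\<close> in \<open>k\<close>
  neither the solvability in \<open>x\<^sub>j\<^sub>0\<close> nor the number \<open>gcd(k, \<phi>(p\<^sup>m))\<close> of its solutions
  changes.\<close>

lemma M_count_Suc: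
  assumes "k > 0" and "multiplicity p k < m" and "j0 < s" and "coprime (a j0) (int p)"
  shows "M_count k s a n p (Suc m) = p ^ (s - 1) * M_count k s a n p m"
proof -
  define I where "I = {..<s} - {j0}"
  define N where "N = totient (p ^ m)"
  define K where "K = gcd k N"
  define \<psi> where "\<psi> = (\<lambda>i. if monomial_solvable k (a j0) m (n - exp_form k a I i) then K else 0)"
  have "m > 0" using assms(2) by simp
  have "N > 0" unfolding N_def using prime by (simp add: prime_gt_0_nat)
  have N_Suc: "totient (p ^ Suc m) = p * N"
    unfolding N_def using totient_prime_power_Suc_eq_mult[OF prime \<open>m > 0\<close>] .
  have K_Suc: "gcd k (p * N) = K"
    using gcd_totient_prime_power[OF prime assms(1)] assms(2) N_Suc unfolding K_def N_def
    by (metis less_SucI)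
  have solvable_Suc: "monomial_solvable k (a j0) (Suc m) v \<longleftrightarrow> monomial_solvable k (a j0) m v" for v
    using monomial_solvable_Suc_iff[OF \<open>m > 0\<close> assms(4)]
      prime_not_dvd_div_gcd_totient[OF prime assms(1,2)] by blast
  have "M_count k s a n p (Suc m) = (\<Sum>i \<in> I \<rightarrow>\<^sub>E {..<p * N}.
      if monomial_solvable k (a j0) (Suc m) (n - exp_form k a I i) then K else 0)"
    unfolding M_count_eq_sum[where a = a, OF zero_less_Suc assms(3,4)] N_Suc K_Suc I_def ..
  also have "\<dots> = (\<Sum>i \<in> I \<rightarrow>\<^sub>E {..<p * N}. \<psi> (restrict (\<lambda>j. i j mod N) I))"
  proof (rule sum.cong[OF refl])
    fix i
    have "[n - exp_form k a I i = n - exp_form k a I (restrict (\<lambda>j. i j mod N) I)] (mod int p ^ m)"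
      unfolding N_def by (intro cong_diff cong_refl exp_form_cong_mod_totient[OF \<open>m > 0\<close>])
    then show "(if monomial_solvable k (a j0) (Suc m) (n - exp_form k a I i) then K else 0) =
        \<psi> (restrict (\<lambda>j. i j mod N) I)"
      unfolding \<psi>_def solvable_Suc by (simp add: monomial_solvable_cong)
  qed
  also have "\<dots> = p ^ card I * (\<Sum>i \<in> I \<rightarrow>\<^sub>E {..<N}. \<psi> i)"
    using sum_PiE_mod_restrict[where c = p and \<psi> = \<psi>, OF _ \<open>N > 0\<close>] unfolding I_def by simp
  also have "(\<Sum>i \<in> I \<rightarrow>\<^sub>E {..<N}. \<psi> i) = M_count k s a n p m"
    unfolding M_count_eq_sum[where a = a, OF \<open>m > 0\<close> assms(3,4)] \<psi>_def I_def N_def K_def ..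
  finally show ?thesis using assms(3) unfolding I_def by simp
qed

lemma chi_seq_Suc:
  assumes "k > 0" and "multiplicity p k < m" and "j0 < s" and "coprime (a j0) (int p)"
  shows "chi_seq k s a n p (Suc m) = chi_seq k s a n p m"
proof -
  have "m > 0" using assms(2) by simp
  have "real p ^ s = real p * real p ^ (s - 1)" using assms(3) by (cases s) auto
  moreover have "real p > 0" using prime by (simp add: prime_gt_0_nat)
  ultimately show ?thesis
    unfolding chi_seq_def M_count_Suc[where a = a, OF assms] totient_prime_power_Suc_eq_mult[OF prime \<open>m > 0\<close>]
    by (simp add: field_simps)
qed

lemma monomial_values_incong:
  fixes k :: nat and c :: int
  assumes "m > 0" and "coprime c (int p)"
  defines "e \<equiv> (p - 1) div gcd k (p - 1)"
  shows "inj_on (\<lambda>i. (c * int g ^ (k * i)) mod int p ^ m) {..<e}"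
    and "incong_mod (int p) ((\<lambda>i. (c * int g ^ (k * i)) mod int p ^ m) ` {..<e})"
proof -
  have eq: "i = i'"
    if "i < e" "i' < e"
      and "[(c * int g ^ (k * i)) mod int p ^ m = (c * int g ^ (k * i')) mod int p ^ m] (mod int p)"
    for i i'
  proof -
    have "int p dvd int p ^ m" using assms(1) by simp
    have reduce: "[x = x mod int p ^ m] (mod int p)" for x :: int
      by (rule cong_dvd_modulus[OF _ \<open>int p dvd int p ^ m\<close>]) (simp add: cong_def)
    have "[c * int g ^ (k * i) = c * int g ^ (k * i')] (mod int p)"
      using cong_trans[OF cong_trans[OF reduce that(3)] cong_sym[OF reduce]] .
    then have "[int g ^ (k * i) = int g ^ (k * i')] (mod int p)"
      using cong_mult_lcancel[OF assms(2)] by blast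
    then have "[int g ^ (k * i) = int g ^ (k * i')] (mod int p ^ 1)" by simp
    then have "[k * i = k * i'] (mod totient (p ^ 1))"
      using primroot_pow_cong_iff[of 1 "k * i" "k * i'"] by simp
    then have "[k * i = k * i'] (mod p - 1)" using totient_prime[OF prime] by simp
    moreover have "p - 1 > 0" using prime_gt_1_nat[OF prime] by simp
    ultimately have "[i = i'] (mod e)" unfolding e_def using cong_mult_lcancel_gcd_nat by blast
    then show "i = i'" using that(1,2) cong_less_modulus_unique_nat by blast
  qed
  show "inj_on (\<lambda>i. (c * int g ^ (k * i)) mod int p ^ m) {..<e}"
    by (rule inj_onI) (use eq in auto)
  show "incong_mod (int p) ((\<lambda>i. (c * int g ^ (k * i)) mod int p ^ m) ` {..<e})"
    unfolding incong_mod_def using eq by blast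
qed

lemma M_count_pos_if_solution:
  assumes "m > 0" and "i \<in> {..<s} \<rightarrow>\<^sub>E {..<totient (p ^ m)}"
    and "[exp_form k a {..<s} i = n] (mod int p ^ m)"
  shows "M_count k s a n p m > 0"
proof -
  have "finite {i \<in> {..<s} \<rightarrow>\<^sub>E {..<totient (p ^ m)}. [exp_form k a {..<s} i = n] (mod int p ^ m)}"
    by (rule finite_subset[of _ "{..<s} \<rightarrow>\<^sub>E {..<totient (p ^ m)}"]) (auto intro: finite_PiE)
  then show ?thesis using assms unfolding M_count_eq_card_exponents[OF assms(1)] by (auto simp: card_gt_0_iff)
qed

lemma exp_form_extend_zero:
  assumes "J \<subseteq> {..<s}"
  shows "exp_form k a {..<s} (restrict (\<lambda>j. if j \<in> J then i j else 0) {..<s}) =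
    exp_form k a J i + (\<Sum>j\<in>{..<s} - J. a j)"
proof -
  define i0 where "i0 = restrict (\<lambda>j. if j \<in> J then i j else 0) {..<s}"
  have s_split: "{..<s} = J \<union> ({..<s} - J)" using assms by auto
  have "exp_form k a {..<s} i0 =
      (\<Sum>j\<in>J. a j * int g ^ (k * i0 j)) + (\<Sum>j\<in>{..<s} - J. a j * int g ^ (k * i0 j))"
    unfolding exp_form_def using assms finite_subset
    by (subst s_split, intro sum.union_disjoint) auto
  also have "(\<Sum>j\<in>{..<s} - J. a j * int g ^ (k * i0 j)) = (\<Sum>j\<in>{..<s} - J. a j)"
    unfolding i0_def by (intro sum.cong) auto
  also have "(\<Sum>j\<in>J. a j * int g ^ (k * i0 j)) = exp_form k a J i"
    unfolding i0_def exp_form_def using assms by (intro sum.cong) auto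
  finally show ?thesis unfolding i0_def .
qed

lemma M_count_pos_if_sums_mod_full:
  assumes "m > 0" and J: "J \<subseteq> {..<s}" and e: "e \<le> totient (p ^ m)"
    and full: "sums_mod (int p ^ m) (\<lambda>j. (\<lambda>i. (a j * int g ^ (k * i)) mod int p ^ m) ` {..<e}) J
      = {0..<int p ^ m}"
  shows "M_count k s a n p m > 0"
proof -
  define q where "q = int p ^ m"
  define c where "c = (\<Sum>j\<in>{..<s} - J. a j)"
  have "q > 0" unfolding q_def using prime by (simp add: prime_gt_0_nat)
  have "(n - c) mod q \<in> sums_mod q (\<lambda>j. (\<lambda>i. (a j * int g ^ (k * i)) mod q) ` {..<e}) J"
    using full \<open>q > 0\<close> unfolding q_def by simp
  then obtain f where f: "\<forall>j\<in>J. f j \<in> (\<lambda>i. (a j * int g ^ (k * i)) mod q) ` {..<e}"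
    and f_sum: "(n - c) mod q = (\<Sum>j\<in>J. f j) mod q"
    unfolding sums_mod_def by blast
  have "\<exists>t. t < e \<and> f j = (a j * int g ^ (k * t)) mod q" if "j \<in> J" for j
    using f that by auto
  then obtain i where i: "\<And>j. j \<in> J \<Longrightarrow> i j < e \<and> f j = (a j * int g ^ (k * i j)) mod q"
    by metis
  have "totient (p ^ m) > 0" using prime by (simp add: prime_gt_0_nat)
  moreover have "i j < totient (p ^ m)" if "j \<in> J" for j using i[OF that] e by linarith
  ultimately have "restrict (\<lambda>j. if j \<in> J then i j else 0) {..<s} \<in> {..<s} \<rightarrow>\<^sub>E {..<totient (p ^ m)}"
    by (auto simp: PiE_iff)
  moreover have "[exp_form k a {..<s} (restrict (\<lambda>j. if j \<in> J then i j else 0) {..<s}) = n] (mod q)"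
  proof -
    have "[exp_form k a J i = (\<Sum>j\<in>J. f j)] (mod q)"
      unfolding exp_form_def
    proof (rule cong_sum)
      fix j assume "j \<in> J"
      then show "[a j * int g ^ (k * i j) = f j] (mod q)" using i by (simp add: cong_def)
    qed
    also have "[(\<Sum>j\<in>J. f j) = n - c] (mod q)" using f_sum by (simp add: cong_def)
    finally have "[exp_form k a J i + c = n - c + c] (mod q)" by (rule cong_add) (rule cong_refl)
    then show ?thesis unfolding exp_form_extend_zero[OF J] c_def by simp
  qed
  ultimately show ?thesis unfolding q_def by (rule M_count_pos_if_solution[OF assms(1)])
qed

lemma M_count_pos:
  assumes "k > 0" and "\<not> (p - 1) dvd k" and "3 * k \<le> card {j \<in> {..<s}. \<not> int p dvd a j}"
  shows "M_count k s a n p (Suc (multiplicity p k)) > 0"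
proof -
  define m where "m = Suc (multiplicity p k)"
  define J where "J = {j \<in> {..<s}. \<not> int p dvd a j}"
  define e where "e = (p - 1) div gcd k (p - 1)"
  define B where "B = (\<lambda>j. (\<lambda>i. (a j * int g ^ (k * i)) mod int p ^ m) ` {..<e})"
  have "e \<le> p - 1" unfolding e_def by (rule div_le_dividend)
  have "e > 0" using prime_gt_1_nat[OF prime] unfolding e_def by (simp add: div_greater_zero_iff)
  have B: "B j \<subseteq> {0..<int p ^ m} \<and> B j \<noteq> {} \<and> incong_mod (int p) (B j) \<and> e \<le> card (B j)"
    if "j \<in> J" for j
  proof -
    have "coprime (a j) (int p)"
      using that prime_imp_coprime[of "int p" "a j"] prime unfolding J_def by (simp add: coprime_commute)
    then have "inj_on (\<lambda>i. (a j * int g ^ (k * i)) mod int p ^ m) {..<e}"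
      and "incong_mod (int p) (B j)"
      using monomial_values_incong[where k = k, of m "a j"] unfolding B_def m_def e_def by simp_all
    moreover have "0 \<in> {..<e}" using \<open>e > 0\<close> by simp
    moreover have "int p ^ m > 0" using prime by (simp add: prime_gt_0_nat)
    ultimately show ?thesis unfolding B_def by (auto simp: card_image)
  qed
  have "p ^ m \<le> 3 * k * (e - 1)"
    using prime_power_Suc_multiplicity_le[OF prime assms(1,2)] unfolding m_def e_def .
  also have "\<dots> \<le> card J * (e - 1)" using assms(3) unfolding J_def by (rule mult_right_mono) simp
  finally have "p ^ m \<le> card J * (e - 1)" .
  moreover have "nat (int p ^ m) = p ^ m" by (metis nat_int of_nat_power)
  ultimately have "sums_mod (int p ^ m) B J = {0..<int p ^ m}"
    using sums_mod_eq_full[of "int p" J B m e] B prime unfolding J_def by simp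
  moreover have "e \<le> totient (p ^ m)"
  proof -
    have "p - 1 \<le> p ^ multiplicity p k * (p - 1)" using prime by (simp add: prime_gt_0_nat)
    then show ?thesis using \<open>e \<le> p - 1\<close> unfolding m_def totient_prime_power_Suc[OF prime] by linarith
  qed
  ultimately show ?thesis
    using M_count_pos_if_sums_mod_full[of m J s e a k n] unfolding B_def J_def m_def by auto
qed

end

lemma LIMSEQ_stationary:
  fixes f :: "nat \<Rightarrow> 'a::topological_space"
  assumes "\<And>m. m \<ge> m0 \<Longrightarrow> f (Suc m) = f m"
  shows "f \<longlonglongrightarrow> f m0"
proof (rule tendsto_eventually, rule eventually_sequentiallyI)
  show "f m = f m0" if "m \<ge> m0" for m
    using that by (induction m rule: dec_induct) (simp_all add: assms)
qed

theorem lemma5p3: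
  fixes k s p :: nat and a :: "nat \<Rightarrow> int" and n :: int
  assumes "k > 0" and "prime p" and "\<not> (p - 1) dvd k"
    and "card {j \<in> {..<s}. \<not> int p dvd a j} \<ge> 3 * k"
  shows "chi_seq k s a n p \<longlonglongrightarrow> chi_p k s a n p \<and> chi_p k s a n p > 0"
proof -
  have "p \<noteq> 2" using assms(3) by auto
  then have "odd p" using prime_odd_nat[OF assms(2)] prime_ge_2_nat[OF assms(2)] by simp
  then obtain g where "\<forall>m>0. residue_primroot (p ^ m) g"
    using residue_primroot_odd_prime_power_exists[OF assms(2)] by blast
  then interpret primroot_prime_powers p g using assms(2) by unfold_locales
  have "card {j \<in> {..<s}. \<not> int p dvd a j} > 0" using assms(1,4) by linarith
  then have "{j \<in> {..<s}. \<not> int p dvd a j} \<noteq> {}" using card_gt_0_iff by blast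
  then obtain j0 where "j0 < s" and "\<not> int p dvd a j0" by blast
  then have "coprime (a j0) (int p)"
    using prime_imp_coprime[of "int p" "a j0"] assms(2) by (simp add: coprime_commute)
  define m0 where "m0 = Suc (multiplicity p k)"
  have "chi_seq k s a n p \<longlonglongrightarrow> chi_seq k s a n p m0"
    using chi_seq_Suc[where a = a, OF assms(1) _ \<open>j0 < s\<close> \<open>coprime (a j0) (int p)\<close>]
    by (intro LIMSEQ_stationary) (simp add: m0_def)
  moreover have "chi_seq k s a n p m0 > 0"
    using M_count_pos[OF assms(1,3,4)] prime_gt_0_nat[OF assms(2)]
    unfolding chi_seq_def m0_def by simp
  ultimately show ?thesis unfolding chi_p_def by (simp add: limI)
qed

end
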